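(* Let $q$ be a power of $2$, let $a,b\in\mathbb{F}_q$ with $b\ne0$, and let $n\ge2$ be an integer. Let $r\ge0$ be such that $2^r$ divides $n+1$ but $2^{r+1}$ does not, and let $m\ge 0$ be defined by $n+1=2^r(m+1)$. Assume $r\ge1$. Then $m$ is even. If $m>0$, then $\hat C_n(a,b)$ is LCD if and only if $$a/b\notin\{-1/b\}\cup\{-1/b+\theta^i+\theta^{-i} : 1\le i\le m/2\},$$ where $\theta\in\overline{\mathbb{F}}_q$ is a primitive $(m+1)$-th root of unity. If $m=0$, then $\hat C_n(a,b)$ is LCD if and only if $a\ne 1$.
   Context: For $a,b\in\mathbb{F}_q$ and $n\ge 2$, $\hat T_n(a,b)$ denotes the $n\times n$ symmetric tridiagonal Toeplitz matrix over $\mathbb{F}_q$ with all diagonal entries equal to $a$, all entries on the first super- and sub-diagonals equal to $b$, and all other entries $0$. $\hat C_n(a,b)$ is the $[2n,n]$ linear code over $\mathbb{F}_q$ with generator matrix $[I_n\mid \hat T_n(a,b)]$. A linear code $C$ is LCD if $C\cap C^\perp=\{0\}$ (Euclidean dual). *)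

theory Defs
  imports "Jordan_Normal_Form.Matrix" "HOL-Algebra.Algebraic_Closure_Type"
begin

definition tridiag_toeplitz :: "nat \<Rightarrow> 'a::field \<Rightarrow> 'a \<Rightarrow> 'a mat" where
  "tridiag_toeplitz n a b = mat n n (\<lambda>(i,j). if i = j then a
       else if i = j + 1 \<or> j = i + 1 then b else 0)"

definition gen_mat_IT :: "nat \<Rightarrow> 'a::field \<Rightarrow> 'a \<Rightarrow> 'a mat" where
  "gen_mat_IT n a b = mat n (2*n) (\<lambda>(i,j). if j < n then (if i = j then 1 else 0)
       else tridiag_toeplitz n a b $$ (i, j - n))"

definition code_of :: "'a::field mat \<Rightarrow> 'a vec set" where
  "code_of G = {v. \<exists>u. dim_vec u = dim_row G \<and> v = transpose_mat G *\<^sub>v u}"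

definition dual_code :: "nat \<Rightarrow> 'a::field vec set \<Rightarrow> 'a vec set" where
  "dual_code N C = {y. dim_vec y = N \<and> (\<forall>x\<in>C. x \<bullet> y = 0)}"

definition is_LCD :: "nat \<Rightarrow> 'a::field vec set \<Rightarrow> bool" where
  "is_LCD N C \<longleftrightarrow> C \<inter> dual_code N C = {0\<^sub>v N}"

definition C_hat :: "nat \<Rightarrow> 'a::field \<Rightarrow> 'a \<Rightarrow> 'a vec set" where
  "C_hat n a b = code_of (gen_mat_IT n a b)"

definition primitive_root_of_unity :: "nat \<Rightarrow> 'a::field \<Rightarrow> bool" where
  "primitive_root_of_unity k \<theta> \<longleftrightarrow> \<theta> ^ k = 1 \<and> (\<forall>j. 0 < j \<and> j < k \<longrightarrow> \<theta> ^ j \<noteq> 1)"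

end

theory Submission
  imports Defs "HOL-Number_Theory.Residues"
begin

text \<open>
  By Massey's criterion the code generated by \<open>G = [I | T]\<close> is LCD iff \<open>G G\<^sup>T = I + T\<^sup>2\<close>
  is nonsingular. In characteristic 2, \<open>I + T\<^sup>2 = (I + T)\<^sup>2\<close>, and \<open>I + T\<close> is the tridiagonal
  Toeplitz matrix with diagonal \<open>a + 1\<close>. Solving \<open>(I + T) v = 0\<close> row by row shows that its
  kernel is nontrivial iff \<open>U (n + 1) = 0\<close> at \<open>y = (a + 1) / b\<close>, where \<open>U\<close> is the Lucas
  sequence \<open>U (k + 2) = y U (k + 1) - U k\<close>. Writing \<open>y = t + 1/t\<close> in the algebraic closure,
  \<open>(t - 1/t) U N = t\<^sup>N - t\<^sup>-\<^sup>N\<close>; for \<open>N = 2\<^sup>r (m + 1)\<close> the injectivity of the Frobenius map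
  then places the zeros at \<open>y = 0\<close> and at \<open>y = t + 1/t\<close> with \<open>t \<noteq> 1\<close> an \<open>(m + 1)\<close>-th root
  of unity, that is, at \<open>\<theta>\<^sup>i + \<theta>\<^sup>-\<^sup>i\<close>.
\<close>

fun lucasU :: "'a::comm_ring_1 \<Rightarrow> nat \<Rightarrow> 'a" where
  "lucasU y 0 = 0"
| "lucasU y (Suc 0) = 1"
| "lucasU y (Suc (Suc k)) = y * lucasU y (Suc k) - lucasU y k"

lemma lucasU_closed_form:
  fixes t s :: "'a::comm_ring_1"
  assumes "t * s = 1"
  shows "(t - s) * lucasU (t + s) k = t ^ k - s ^ k"
proof (induction "t + s" k rule: lucasU.induct)
  case (3 k)
  have ts: "t * s ^ Suc k = s ^ k" "s * t ^ Suc k = t ^ k"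
    using assms by (simp_all add: mult.assoc[symmetric] mult.commute)
  have "(t - s) * lucasU (t + s) (Suc (Suc k))
      = (t + s) * ((t - s) * lucasU (t + s) (Suc k)) - (t - s) * lucasU (t + s) k"
    by (simp add: algebra_simps)
  also have "\<dots> = (t + s) * (t ^ Suc k - s ^ Suc k) - (t ^ k - s ^ k)"
    using 3 by simp
  also have "\<dots> = t ^ Suc (Suc k) - s ^ Suc (Suc k) - t * s ^ Suc k + s * t ^ Suc k - (t ^ k - s ^ k)"
    by (simp add: algebra_simps)
  also have "\<dots> = t ^ Suc (Suc k) - s ^ Suc (Suc k)"
    using ts by simp
  finally show ?case .
qed auto

lemma lucasU_0_even: "lucasU (0::'a::comm_ring_1) (2 * j) = 0"
  by (induction j) (auto simp: numeral_2_eq_2)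

lemma lucasU_unique:
  fixes f :: "nat \<Rightarrow> 'a::comm_ring_1"
  assumes f0: "f 0 = 0"
    and rec: "\<And>k. k + 2 \<le> N \<Longrightarrow> f (k + 2) = y * f (k + 1) - f k"
    and "k \<le> N"
  shows "f k = f 1 * lucasU y k"
  using \<open>k \<le> N\<close>
proof (induction k rule: induct_nat_012)
  case (ge2 k)
  have "f (Suc (Suc k)) = y * f (Suc k) - f k"
    using rec[of k] ge2(3) by (simp add: numeral_2_eq_2)
  also have "\<dots> = f 1 * lucasU y (Suc (Suc k))"
    using ge2 by (simp add: algebra_simps)
  finally show ?case .
qed (simp_all add: f0)

lemma to_ac_lucasU: "to_ac (lucasU y k) = lucasU (to_ac y) k"
  by (induction y k rule: lucasU.induct) auto

lemma CHAR_eq_2_if_card_eq_power_2: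
  assumes "card (UNIV :: 'a::{finite,field} set) = 2 ^ k"
  shows "CHAR('a) = 2"
proof -
  have p: "Factorial_Ring.prime CHAR('a)"
    by (simp add: finite_imp_CHAR_pos prime_CHAR_semidom)
  moreover have "CHAR('a) dvd 2 ^ k"
    using CHAR_dvd_CARD[where 'a='a] assms by simp
  ultimately have "CHAR('a) dvd 2"
    using prime_dvd_power by blast
  hence "CHAR('a) \<le> 2"
    by (simp add: dvd_imp_le)
  thus ?thesis
    using prime_ge_2_nat[OF p] by simp
qed

lemma one_add_one_CHAR_2: "CHAR('a::ring_1) = 2 \<Longrightarrow> (1::'a) + 1 = 0"
  by (metis of_nat_CHAR one_add_one of_nat_numeral)

lemma eq_1_if_power_2_power_eq_1:
  fixes x :: "'a::field"
  assumes char: "CHAR('a) = 2" and "x ^ (2 ^ r) = 1"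
  shows "x = 1"
proof -
  have "(x + 1) ^ (2 ^ r) = x ^ (2 ^ r) + 1 ^ (2 ^ r)"
    by (rule freshmans_dream') (simp_all add: char)
  also have "\<dots> = 0"
    using assms(2) one_add_one_CHAR_2[OF char] by simp
  finally have "x = - 1"
    by (simp add: eq_neg_iff_add_eq_0)
  thus ?thesis
    using uminus_CHAR_2[OF char] by metis
qed

lemma ex_sum_inverse_eq:
  fixes y :: "'a::alg_closed_field"
  obtains t where "t \<noteq> 0" "y = t + inverse t"
proof -
  obtain t where root: "poly [:1, - y, 1:] t = 0"
    using alg_closed_imp_poly_has_root[of "[:1, - y, 1:]"] by auto
  hence "y * t = t * t + 1"
    by (simp add: algebra_simps eq_neg_iff_add_eq_0)
  moreover have t0: "t \<noteq> 0"
    using root by auto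
  ultimately have "y = (t * t + 1) / t"
    by (simp add: eq_divide_eq)
  also have "\<dots> = t + inverse t"
    using t0 by (simp add: field_simps)
  finally show ?thesis
    using t0 that by blast
qed

lemma lucasU_sum_inverse_eq_0_iff:
  fixes t :: "'a::field"
  assumes "t \<noteq> 0" "t ^ 2 \<noteq> 1"
  shows "lucasU (t + inverse t) N = 0 \<longleftrightarrow> t ^ (2 * N) = 1"
proof -
  have "t - inverse t \<noteq> 0"
    using assms by (auto simp: power2_eq_square field_simps)
  hence "lucasU (t + inverse t) N = 0 \<longleftrightarrow> t ^ N = inverse t ^ N"
    using lucasU_closed_form[of t "inverse t" N] assms(1) by auto
  also have "\<dots> \<longleftrightarrow> t ^ N * t ^ N = 1"
    using assms(1) by (auto simp: power_inverse field_simps)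
  finally show ?thesis
    by (simp add: mult_2 power_add)
qed

lemma lucasU_eq_0_iff_CHAR_2:
  fixes y :: "'a::alg_closed_field"
  assumes char: "CHAR('a) = 2" and "r \<ge> 1"
  shows "lucasU y (2 ^ r * (m + 1)) = 0 \<longleftrightarrow>
    y = 0 \<or> (\<exists>t. t ^ (m + 1) = 1 \<and> t \<noteq> 1 \<and> y = t + inverse t)"
    (is "lucasU y ?N = 0 \<longleftrightarrow> _")
proof -
  have square_ne_1: "t ^ 2 \<noteq> 1" if "t \<noteq> 1" for t :: 'a
    using eq_1_if_power_2_power_eq_1[OF char, of t 1] that by auto
  have "2 * ?N = (m + 1) * 2 ^ (r + 1)"
    by simp
  hence power_2N: "t ^ (2 * ?N) = (t ^ (m + 1)) ^ 2 ^ (r + 1)" for t :: 'a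
    by (simp only: power_mult)
  show ?thesis
  proof
    assume U: "lucasU y ?N = 0"
    obtain t where t: "t \<noteq> 0" "y = t + inverse t"
      by (rule ex_sum_inverse_eq)
    show "y = 0 \<or> (\<exists>t. t ^ (m + 1) = 1 \<and> t \<noteq> 1 \<and> y = t + inverse t)"
    proof (cases "t = 1")
      case True
      thus ?thesis
        using t one_add_one_CHAR_2[OF char] by simp
    next
      case False
      hence "t ^ (2 * ?N) = 1"
        using U t lucasU_sum_inverse_eq_0_iff square_ne_1 by blast
      hence "t ^ (m + 1) = 1"
        using eq_1_if_power_2_power_eq_1[OF char] power_2N by metis
      thus ?thesis
        using False t by blast
    qed
  next
    assume "y = 0 \<or> (\<exists>t. t ^ (m + 1) = 1 \<and> t \<noteq> 1 \<and> y = t + inverse t)"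
    thus "lucasU y ?N = 0"
    proof
      assume "y = 0"
      moreover have "?N = 2 * (2 ^ (r - 1) * (m + 1))"
        using \<open>r \<ge> 1\<close> by (simp add: power_eq_if)
      ultimately show ?thesis
        by (simp only: lucasU_0_even)
    next
      assume "\<exists>t. t ^ (m + 1) = 1 \<and> t \<noteq> 1 \<and> y = t + inverse t"
      then obtain t where t: "t ^ (m + 1) = 1" "t \<noteq> 1" "y = t + inverse t"
        by blast
      have "t \<noteq> 0"
        using t(1) by auto
      moreover have "t ^ (2 * ?N) = 1"
        using t(1) power_2N by simp
      ultimately show ?thesis
        using t lucasU_sum_inverse_eq_0_iff square_ne_1 by blast
    qed
  qed
qed

lemma inj_on_power_primitive_root_of_unity:
  fixes \<theta> :: "'a::field"
  assumes "primitive_root_of_unity M \<theta>"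
  shows "inj_on (\<lambda>j. \<theta> ^ j) {..<M}"
proof -
  have "\<theta> ^ i \<noteq> \<theta> ^ j" if "i < j" "j < M" for i j
  proof
    assume eq: "\<theta> ^ i = \<theta> ^ j"
    have "\<theta> ^ M = 1" "M > 0"
      using assms that unfolding primitive_root_of_unity_def by auto
    hence "\<theta> \<noteq> 0"
      by (cases "\<theta> = 0") (auto simp: power_0_left)
    hence "\<theta> ^ (j - i) = 1"
      using eq \<open>i < j\<close> by (simp add: power_diff)
    thus False
      using assms that unfolding primitive_root_of_unity_def by simp
  qed
  thus ?thesis
    by (intro inj_onI) (metis lessThan_iff linorder_neqE_nat)
qed

lemma root_of_unity_eq_power_primitive:
  fixes \<theta> :: "'a::field"
  assumes prim: "primitive_root_of_unity M \<theta>" and "M > 0" and "t ^ M = 1"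
  obtains j where "j < M" "t = \<theta> ^ j"
proof -
  define p :: "'a poly" where "p = monom 1 M - 1"
  have poly_p: "poly p x = x ^ M - 1" for x
    by (simp add: p_def poly_monom)
  have "p \<noteq> 0"
    using poly_p[of 0] \<open>M > 0\<close> by (auto simp: power_0_left)
  moreover have "degree p \<le> M"
    unfolding p_def by (intro degree_diff_le degree_monom_le) simp
  ultimately have roots: "finite {x. poly p x = 0}" "card {x. poly p x = 0} \<le> M"
    using poly_roots_finite card_poly_roots_bound[of p] by fastforce+
  have powers_in_roots: "(\<lambda>j. \<theta> ^ j) ` {..<M} \<subseteq> {x. poly p x = 0}"
    using prim unfolding primitive_root_of_unity_def
    by (auto simp: poly_p) (metis mult.commute power_mult power_one)
  moreover have "card ((\<lambda>j. \<theta> ^ j) ` {..<M}) = M"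
    using card_image[OF inj_on_power_primitive_root_of_unity[OF prim]] by simp
  ultimately have "(\<lambda>j. \<theta> ^ j) ` {..<M} = {x. poly p x = 0}"
    using roots card_mono[OF roots(1) powers_in_roots] by (intro card_subset_eq) auto
  moreover have "t \<in> {x. poly p x = 0}"
    using \<open>t ^ M = 1\<close> by (simp add: poly_p)
  ultimately show ?thesis
    using that by blast
qed

lemma sum_inverse_root_of_unity_iff:
  fixes \<theta> :: "'a::field"
  assumes prim: "primitive_root_of_unity (m + 1) \<theta>" and "even m"
  shows "(\<exists>t. t ^ (m + 1) = 1 \<and> t \<noteq> 1 \<and> y = t + inverse t) \<longleftrightarrow>
    (\<exists>i. 1 \<le> i \<and> i \<le> m div 2 \<and> y = \<theta> ^ i + inverse \<theta> ^ i)"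
proof
  have \<theta>: "\<theta> ^ (m + 1) = 1" "\<And>j. 0 < j \<Longrightarrow> j < m + 1 \<Longrightarrow> \<theta> ^ j \<noteq> 1"
    using prim unfolding primitive_root_of_unity_def by auto
  assume "\<exists>t. t ^ (m + 1) = 1 \<and> t \<noteq> 1 \<and> y = t + inverse t"
  then obtain t where t: "t ^ (m + 1) = 1" "t \<noteq> 1" "y = t + inverse t"
    by blast
  obtain j where j: "j < m + 1" "t = \<theta> ^ j"
    using root_of_unity_eq_power_primitive[OF prim _ t(1)] by auto
  have "1 \<le> j"
    using j t(2) by (cases j) auto
  show "\<exists>i. 1 \<le> i \<and> i \<le> m div 2 \<and> y = \<theta> ^ i + inverse \<theta> ^ i"
  proof (cases "j \<le> m div 2")
    case True
    thus ?thesis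
      using \<open>1 \<le> j\<close> t(3) j by (intro exI[of _ j]) (auto simp: power_inverse)
  next
    case False
    have "\<theta> ^ (m + 1 - j) * t = 1"
      using \<theta>(1) j by (simp flip: power_add)
    hence inv_t: "inverse t = \<theta> ^ (m + 1 - j)"
      by (simp add: inverse_unique mult.commute)
    hence "t = inverse \<theta> ^ (m + 1 - j)"
      by (metis inverse_inverse_eq power_inverse)
    hence "y = \<theta> ^ (m + 1 - j) + inverse \<theta> ^ (m + 1 - j)"
      using t(3) inv_t by (simp add: add.commute)
    moreover have "1 \<le> m + 1 - j" "m + 1 - j \<le> m div 2"
      using False j \<open>even m\<close> by auto
    ultimately show ?thesis
      by blast
  qed
next
  have \<theta>: "\<theta> ^ (m + 1) = 1" "\<And>j. 0 < j \<Longrightarrow> j < m + 1 \<Longrightarrow> \<theta> ^ j \<noteq> 1"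
    using prim unfolding primitive_root_of_unity_def by auto
  assume "\<exists>i. 1 \<le> i \<and> i \<le> m div 2 \<and> y = \<theta> ^ i + inverse \<theta> ^ i"
  then obtain i where i: "1 \<le> i" "i \<le> m div 2" "y = \<theta> ^ i + inverse \<theta> ^ i"
    by blast
  have "(\<theta> ^ i) ^ (m + 1) = 1"
    using \<theta>(1) by (metis power_mult mult.commute power_one)
  moreover have "\<theta> ^ i \<noteq> 1"
    using \<theta>(2)[of i] i by auto
  ultimately show "\<exists>t. t ^ (m + 1) = 1 \<and> t \<noteq> 1 \<and> y = t + inverse t"
    using i(3) by (auto simp: power_inverse)
qed

lemma mem_code_of_iff:
  assumes "G \<in> carrier_mat k N"
  shows "x \<in> code_of G \<longleftrightarrow> (\<exists>u\<in>carrier_vec k. x = transpose_mat G *\<^sub>v u)"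
proof -
  have "dim_row G = k"
    using assms by simp
  thus ?thesis
    unfolding code_of_def carrier_vec_def Bex_def mem_Collect_eq by metis
qed

lemma mem_dual_code_of_iff:
  assumes G: "G \<in> carrier_mat k N"
  shows "y \<in> dual_code N (code_of G) \<longleftrightarrow> y \<in> carrier_vec N \<and> G *\<^sub>v y = 0\<^sub>v k"
proof
  assume y: "y \<in> dual_code N (code_of G)"
  hence yN: "y \<in> carrier_vec N"
    unfolding dual_code_def by (auto intro: carrier_vecI)
  have "(G *\<^sub>v y) $ i = 0" if i: "i < k" for i
  proof -
    have "transpose_mat G *\<^sub>v unit_vec k i \<in> code_of G"
      using G by (auto simp: mem_code_of_iff)
    hence "(transpose_mat G *\<^sub>v unit_vec k i) \<bullet> y = 0"
      using y unfolding dual_code_def by blast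
    moreover have "(transpose_mat G *\<^sub>v unit_vec k i) \<bullet> y = unit_vec k i \<bullet> (G *\<^sub>v y)"
      using transpose_vec_mult_scalar[OF G yN] i by simp
    moreover have "unit_vec k i \<bullet> (G *\<^sub>v y) = (G *\<^sub>v y) $ i"
      using G yN i by (intro scalar_prod_left_unit) auto
    ultimately show ?thesis
      by simp
  qed
  thus "y \<in> carrier_vec N \<and> G *\<^sub>v y = 0\<^sub>v k"
    using yN G by (auto intro!: eq_vecI)
next
  assume y: "y \<in> carrier_vec N \<and> G *\<^sub>v y = 0\<^sub>v k"
  have "x \<bullet> y = 0" if "x \<in> code_of G" for x
  proof -
    obtain u where u: "u \<in> carrier_vec k" "x = transpose_mat G *\<^sub>v u"
      using \<open>x \<in> code_of G\<close> G by (auto simp: mem_code_of_iff)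
    hence "x \<bullet> y = u \<bullet> (G *\<^sub>v y)"
      using transpose_vec_mult_scalar[OF G] y by simp
    thus ?thesis
      using u y by simp
  qed
  thus "y \<in> dual_code N (code_of G)"
    using y unfolding dual_code_def by (auto dest: carrier_vecD)
qed

lemma is_LCD_code_of_iff:
  assumes G: "G \<in> carrier_mat k N"
    and inj: "\<And>u. u \<in> carrier_vec k \<Longrightarrow> transpose_mat G *\<^sub>v u = 0\<^sub>v N \<Longrightarrow> u = 0\<^sub>v k"
  shows "is_LCD N (code_of G) \<longleftrightarrow>
    (\<forall>u\<in>carrier_vec k. (G * transpose_mat G) *\<^sub>v u = 0\<^sub>v k \<longrightarrow> u = 0\<^sub>v k)"
proof -
  have GT: "transpose_mat G \<in> carrier_mat N k"
    using G by simp
  have intersection: "x \<in> code_of G \<inter> dual_code N (code_of G) \<longleftrightarrow>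
      (\<exists>u\<in>carrier_vec k. x = transpose_mat G *\<^sub>v u \<and> (G * transpose_mat G) *\<^sub>v u = 0\<^sub>v k)" for x
  proof -
    have "G *\<^sub>v (transpose_mat G *\<^sub>v u) = (G * transpose_mat G) *\<^sub>v u"
      and "transpose_mat G *\<^sub>v u \<in> carrier_vec N" if "u \<in> carrier_vec k" for u
      using assoc_mult_mat_vec[OF G GT that] GT that by auto
    thus ?thesis
      unfolding Int_iff mem_code_of_iff[OF G] mem_dual_code_of_iff[OF G] by metis
  qed
  have zero_T: "transpose_mat G *\<^sub>v 0\<^sub>v k = 0\<^sub>v N"
    using GT by auto
  hence zero_GGT: "(G * transpose_mat G) *\<^sub>v 0\<^sub>v k = 0\<^sub>v k"
    using G GT by auto
  show ?thesis
  proof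
    assume lcd: "is_LCD N (code_of G)"
    show "\<forall>u\<in>carrier_vec k. (G * transpose_mat G) *\<^sub>v u = 0\<^sub>v k \<longrightarrow> u = 0\<^sub>v k"
    proof (intro ballI impI)
      fix u :: "'a vec"
      assume "u \<in> carrier_vec k" "(G * transpose_mat G) *\<^sub>v u = 0\<^sub>v k"
      hence "transpose_mat G *\<^sub>v u \<in> code_of G \<inter> dual_code N (code_of G)"
        using intersection by blast
      hence "transpose_mat G *\<^sub>v u = 0\<^sub>v N"
        using lcd unfolding is_LCD_def by blast
      thus "u = 0\<^sub>v k"
        using inj \<open>u \<in> carrier_vec k\<close> by blast
    qed
  next
    assume ker: "\<forall>u\<in>carrier_vec k. (G * transpose_mat G) *\<^sub>v u = 0\<^sub>v k \<longrightarrow> u = 0\<^sub>v k"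
    have "x \<in> code_of G \<inter> dual_code N (code_of G) \<longleftrightarrow> x = 0\<^sub>v N" for x
      unfolding intersection using ker zero_T zero_GGT zero_carrier_vec by metis
    thus "is_LCD N (code_of G)"
      unfolding is_LCD_def by blast
  qed
qed

lemma tridiag_toeplitz_carrier: "tridiag_toeplitz n a b \<in> carrier_mat n n"
  by (simp add: tridiag_toeplitz_def)

lemma one_add_tridiag_toeplitz: "1\<^sub>m n + tridiag_toeplitz n a b = tridiag_toeplitz n (a + 1) b"
  by (intro eq_matI) (auto simp: tridiag_toeplitz_def)

text \<open>
  \<open>vec_pad u\<close> is the sequence \<open>0, u $ 0, \<dots>, u $ (n - 1), 0, 0, \<dots>\<close>: with this padding the first and
  last rows of a tridiagonal system are instances of the same three-term recurrence as the others.
\<close>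
definition vec_pad :: "'a::zero vec \<Rightarrow> nat \<Rightarrow> 'a" where
  "vec_pad u k = (if 0 < k \<and> k \<le> dim_vec u then u $ (k - 1) else 0)"

lemma tridiag_toeplitz_mult_vec_nth:
  assumes u: "u \<in> carrier_vec n" and i: "i < n"
  shows "(tridiag_toeplitz n c b *\<^sub>v u) $ i
    = b * vec_pad u i + c * vec_pad u (i + 1) + b * vec_pad u (i + 2)"
proof -
  have "(tridiag_toeplitz n c b *\<^sub>v u) $ i = (\<Sum>j\<in>{0..<n}. tridiag_toeplitz n c b $$ (i, j) * u $ j)"
    using u i by (simp add: tridiag_toeplitz_def scalar_prod_def)
  also have "\<dots> = (\<Sum>j\<in>{0..<n}. (if Suc j = i then b * u $ j else 0)
      + (if j = i then c * u $ j else 0) + (if j = Suc i then b * u $ j else 0))"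
    using i by (intro sum.cong) (auto simp: tridiag_toeplitz_def)
  also have "\<dots> = b * vec_pad u i + c * vec_pad u (i + 1) + b * vec_pad u (i + 2)"
    using u i by (cases i) (auto simp: sum.distrib vec_pad_def)
  finally show ?thesis .
qed

lemma tridiag_toeplitz_mult_vec_eq_0_iff:
  assumes b: "b \<noteq> 0" and u: "u \<in> carrier_vec n"
  shows "tridiag_toeplitz n c b *\<^sub>v u = 0\<^sub>v n \<longleftrightarrow>
    (\<forall>k. k + 2 \<le> n + 1 \<longrightarrow> vec_pad u (k + 2) = - c / b * vec_pad u (k + 1) - vec_pad u k)"
proof -
  have row: "(tridiag_toeplitz n c b *\<^sub>v u) $ k = 0 \<longleftrightarrow>
      vec_pad u (k + 2) = - c / b * vec_pad u (k + 1) - vec_pad u k" if "k < n" for k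
  proof -
    have "(tridiag_toeplitz n c b *\<^sub>v u) $ k
        = b * (vec_pad u (k + 2) - (- c / b * vec_pad u (k + 1) - vec_pad u k))"
      using tridiag_toeplitz_mult_vec_nth[OF u that] b by (simp add: field_simps)
    thus ?thesis
      using b by simp
  qed
  have "tridiag_toeplitz n c b *\<^sub>v u = 0\<^sub>v n \<longleftrightarrow> (\<forall>k<n. (tridiag_toeplitz n c b *\<^sub>v u) $ k = 0)"
    using tridiag_toeplitz_carrier[of n c b] by (auto simp: vec_eq_iff)
  thus ?thesis
    using row by auto
qed

lemma tridiag_toeplitz_kernel_trivial_iff:
  assumes b: "b \<noteq> 0"
  shows "(\<forall>u\<in>carrier_vec n. tridiag_toeplitz n c b *\<^sub>v u = 0\<^sub>v n \<longrightarrow> u = 0\<^sub>v n)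
    \<longleftrightarrow> lucasU (- c / b) (n + 1) \<noteq> 0"
proof
  assume trivial: "\<forall>u\<in>carrier_vec n. tridiag_toeplitz n c b *\<^sub>v u = 0\<^sub>v n \<longrightarrow> u = 0\<^sub>v n"
  show "lucasU (- c / b) (n + 1) \<noteq> 0"
  proof
    assume U: "lucasU (- c / b) (n + 1) = 0"
    define u where "u = vec n (\<lambda>i. lucasU (- c / b) (i + 1))"
    have u_carrier: "u \<in> carrier_vec n"
      by (simp add: u_def)
    have pad: "vec_pad u k = lucasU (- c / b) k" if "k \<le> n + 1" for k
      using that U by (cases "k = n + 1"; cases k) (auto simp: vec_pad_def u_def)
    have "tridiag_toeplitz n c b *\<^sub>v u = 0\<^sub>v n"
      using pad by (auto simp: tridiag_toeplitz_mult_vec_eq_0_iff[OF b u_carrier] numeral_2_eq_2)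
    hence "u = 0\<^sub>v n"
      using trivial u_carrier by blast
    moreover have "n \<noteq> 0"
      using U by (cases n) auto
    moreover have "u $ 0 = 1"
      using \<open>n \<noteq> 0\<close> by (simp add: u_def)
    ultimately show False
      by simp
  qed
next
  assume U: "lucasU (- c / b) (n + 1) \<noteq> 0"
  show "\<forall>u\<in>carrier_vec n. tridiag_toeplitz n c b *\<^sub>v u = 0\<^sub>v n \<longrightarrow> u = 0\<^sub>v n"
  proof (intro ballI impI)
    fix u :: "'a vec"
    assume u: "u \<in> carrier_vec n" and "tridiag_toeplitz n c b *\<^sub>v u = 0\<^sub>v n"
    hence rec: "\<And>k. k + 2 \<le> n + 1 \<Longrightarrow>
        vec_pad u (k + 2) = - c / b * vec_pad u (k + 1) - vec_pad u k"
      using tridiag_toeplitz_mult_vec_eq_0_iff[OF b u] by blast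
    have pad0: "vec_pad u 0 = 0"
      by (simp add: vec_pad_def)
    have "vec_pad u (n + 1) = vec_pad u 1 * lucasU (- c / b) (n + 1)"
      using lucasU_unique[where N = "n + 1" and k = "n + 1", OF pad0 rec] by simp
    moreover have "vec_pad u (n + 1) = 0"
      using u by (simp add: vec_pad_def)
    ultimately have "vec_pad u 1 = 0"
      using U by simp
    hence "vec_pad u (i + 1) = 0" if "i < n" for i
      using lucasU_unique[where N = "n + 1" and k = "i + 1", OF pad0 rec] that by simp
    thus "u = 0\<^sub>v n"
      using u by (intro eq_vecI) (auto simp: vec_pad_def)
  qed
qed

lemma dim_gen_mat_IT [simp]:
  "dim_row (gen_mat_IT n a b) = n" "dim_col (gen_mat_IT n a b) = 2 * n"
  by (simp_all add: gen_mat_IT_def)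

lemma dim_tridiag_toeplitz [simp]:
  "dim_row (tridiag_toeplitz n a b) = n" "dim_col (tridiag_toeplitz n a b) = n"
  by (simp_all add: tridiag_toeplitz_def)

lemma transpose_gen_mat_IT_mult_vec_nth:
  assumes "u \<in> carrier_vec n" "j < n"
  shows "(transpose_mat (gen_mat_IT n a b) *\<^sub>v u) $ j = u $ j"
  using assms by (simp add: scalar_prod_def gen_mat_IT_def if_distrib[where f = "\<lambda>x. x * _"] cong: if_cong)

lemma gen_mat_IT_mult_transpose:
  "gen_mat_IT n a b * transpose_mat (gen_mat_IT n a b)
    = 1\<^sub>m n + tridiag_toeplitz n a b * tridiag_toeplitz n a b"
proof (rule eq_matI)
  fix i j
  assume "i < dim_row (1\<^sub>m n + tridiag_toeplitz n a b * tridiag_toeplitz n a b)"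
    and "j < dim_col (1\<^sub>m n + tridiag_toeplitz n a b * tridiag_toeplitz n a b)"
  hence ij: "i < n" "j < n"
    by simp_all
  let ?G = "gen_mat_IT n a b" and ?T = "tridiag_toeplitz n a b"
  let ?g = "\<lambda>l. ?G $$ (i, l) * ?G $$ (j, l)"
  have "(?G * transpose_mat ?G) $$ (i, j) = sum ?g {0..<2 * n}"
    using ij by (simp add: scalar_prod_def)
  also have "\<dots> = sum ?g {0..<n} + sum ?g {n..<2 * n}"
    by (rule sum.atLeastLessThan_concat[symmetric]) simp_all
  also have "sum ?g {0..<n} = (if i = j then 1 else 0)"
    using ij by (simp add: gen_mat_IT_def if_distrib[where f = "\<lambda>x. x * _"] cong: if_cong)
  also have "sum ?g {n..<2 * n} = (\<Sum>l\<in>{0..<n}. ?g (l + n))"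
    using sum.shift_bounds_nat_ivl[of ?g 0 n n] by (simp add: mult_2)
  also have "\<dots> = (\<Sum>l\<in>{0..<n}. ?T $$ (i, l) * ?T $$ (l, j))"
    using ij by (intro sum.cong) (auto simp: gen_mat_IT_def tridiag_toeplitz_def)
  also have "\<dots> = (?T * ?T) $$ (i, j)"
    using ij by (simp add: scalar_prod_def)
  finally show "(?G * transpose_mat ?G) $$ (i, j) = (1\<^sub>m n + ?T * ?T) $$ (i, j)"
    using ij by simp
qed simp_all

lemma is_LCD_C_hat_iff:
  "is_LCD (2 * n) (C_hat n a b) \<longleftrightarrow>
    (\<forall>u\<in>carrier_vec n.
      (1\<^sub>m n + tridiag_toeplitz n a b * tridiag_toeplitz n a b) *\<^sub>v u = 0\<^sub>v n \<longrightarrow> u = 0\<^sub>v n)"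
proof -
  have G: "gen_mat_IT n a b \<in> carrier_mat n (2 * n)"
    by (rule carrier_matI) simp_all
  have "u = 0\<^sub>v n"
    if u: "u \<in> carrier_vec n" and GTu: "transpose_mat (gen_mat_IT n a b) *\<^sub>v u = 0\<^sub>v (2 * n)"
    for u
  proof (rule eq_vecI)
    fix j
    assume "j < dim_vec (0\<^sub>v n :: 'a vec)"
    hence j: "j < n"
      by simp
    have "u $ j = (transpose_mat (gen_mat_IT n a b) *\<^sub>v u) $ j"
      by (rule transpose_gen_mat_IT_mult_vec_nth[OF u j, symmetric])
    also have "\<dots> = 0"
      unfolding GTu using j by simp
    finally show "u $ j = 0\<^sub>v n $ j"
      using j by simp
  qed (use u in simp)
  hence "is_LCD (2 * n) (code_of (gen_mat_IT n a b)) \<longleftrightarrow> (\<forall>u\<in>carrier_vec n.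
      (gen_mat_IT n a b * transpose_mat (gen_mat_IT n a b)) *\<^sub>v u = 0\<^sub>v n \<longrightarrow> u = 0\<^sub>v n)"
    by (rule is_LCD_code_of_iff[OF G])
  thus ?thesis
    unfolding C_hat_def gen_mat_IT_mult_transpose .
qed

lemma kernel_trivial_mult_self_iff:
  assumes A: "A \<in> carrier_mat n n"
  shows "(\<forall>u\<in>carrier_vec n. (A * A) *\<^sub>v u = 0\<^sub>v n \<longrightarrow> u = 0\<^sub>v n) \<longleftrightarrow>
    (\<forall>u\<in>carrier_vec n. A *\<^sub>v u = 0\<^sub>v n \<longrightarrow> u = 0\<^sub>v n)"
proof
  assume AA: "\<forall>u\<in>carrier_vec n. (A * A) *\<^sub>v u = 0\<^sub>v n \<longrightarrow> u = 0\<^sub>v n"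
  show "\<forall>u\<in>carrier_vec n. A *\<^sub>v u = 0\<^sub>v n \<longrightarrow> u = 0\<^sub>v n"
  proof (intro ballI impI)
    fix u :: "'a vec"
    assume u: "u \<in> carrier_vec n" and "A *\<^sub>v u = 0\<^sub>v n"
    hence "(A * A) *\<^sub>v u = 0\<^sub>v n"
      using A by auto
    thus "u = 0\<^sub>v n"
      using AA u by blast
  qed
next
  assume A_inj: "\<forall>u\<in>carrier_vec n. A *\<^sub>v u = 0\<^sub>v n \<longrightarrow> u = 0\<^sub>v n"
  show "\<forall>u\<in>carrier_vec n. (A * A) *\<^sub>v u = 0\<^sub>v n \<longrightarrow> u = 0\<^sub>v n"
  proof (intro ballI impI)
    fix u :: "'a vec"
    assume u: "u \<in> carrier_vec n" and "(A * A) *\<^sub>v u = 0\<^sub>v n"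
    hence "A *\<^sub>v (A *\<^sub>v u) = 0\<^sub>v n"
      using A by simp
    moreover have "A *\<^sub>v u \<in> carrier_vec n"
      using A u by simp
    ultimately have "A *\<^sub>v u = 0\<^sub>v n"
      using A_inj by blast
    thus "u = 0\<^sub>v n"
      using A_inj u by blast
  qed
qed

lemma one_add_square_tridiag_toeplitz_CHAR_2:
  fixes a b :: "'a::field"
  assumes char: "CHAR('a) = 2"
  shows "1\<^sub>m n + tridiag_toeplitz n a b * tridiag_toeplitz n a b
    = tridiag_toeplitz n (a + 1) b * tridiag_toeplitz n (a + 1) b"
proof -
  let ?T = "tridiag_toeplitz n a b"
  have T: "?T \<in> carrier_mat n n"
    by (rule tridiag_toeplitz_carrier)
  have "tridiag_toeplitz n (a + 1) b * tridiag_toeplitz n (a + 1) b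
      = (1\<^sub>m n + ?T) * (1\<^sub>m n + ?T)"
    by (simp only: one_add_tridiag_toeplitz)
  also have "\<dots> = 1\<^sub>m n * (1\<^sub>m n + ?T) + ?T * (1\<^sub>m n + ?T)"
    using T by (intro add_mult_distrib_mat) auto
  also have "\<dots> = (1\<^sub>m n + ?T) + (?T + ?T * ?T)"
    using T by (simp add: mult_add_distrib_mat[OF T one_carrier_mat T])
  also have "\<dots> = 1\<^sub>m n + ?T * ?T"
  proof (rule eq_matI)
    fix i j
    assume "i < dim_row (1\<^sub>m n + ?T * ?T)" "j < dim_col (1\<^sub>m n + ?T * ?T)"
    moreover have "?T $$ (i, j) + ?T $$ (i, j) = 0"
      using one_add_one_CHAR_2[OF char] by (simp flip: mult_2 add: numeral_2_eq_2)
    ultimately show "((1\<^sub>m n + ?T) + (?T + ?T * ?T)) $$ (i, j) = (1\<^sub>m n + ?T * ?T) $$ (i, j)"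
      by (simp add: algebra_simps)
  qed simp_all
  finally show ?thesis ..
qed

lemma is_LCD_C_hat_iff_lucasU_CHAR_2:
  fixes a b :: "'a::field"
  assumes char: "CHAR('a) = 2" and b: "b \<noteq> 0"
  shows "is_LCD (2 * n) (C_hat n a b) \<longleftrightarrow> lucasU ((a + 1) / b) (n + 1) \<noteq> 0"
proof -
  have neg: "- (a + 1) = a + 1"
    by (rule uminus_CHAR_2[OF char])
  show ?thesis
    unfolding is_LCD_C_hat_iff one_add_square_tridiag_toeplitz_CHAR_2[OF char]
      kernel_trivial_mult_self_iff[OF tridiag_toeplitz_carrier]
      tridiag_toeplitz_kernel_trivial_iff[OF b] neg ..
qed

lemma is_LCD_C_hat_iff_CHAR_2:
  fixes a b :: "'a::field"
  assumes char: "CHAR('a) = 2" and b: "b \<noteq> 0"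
    and n: "n + 1 = 2 ^ r * (m + 1)" and "r \<ge> 1"
  defines "Y \<equiv> to_ac ((a + 1) / b)"
  shows "is_LCD (2 * n) (C_hat n a b) \<longleftrightarrow>
    \<not> (Y = 0 \<or> (\<exists>t. t ^ (m + 1) = 1 \<and> t \<noteq> 1 \<and> Y = t + inverse t))"
proof -
  have "is_LCD (2 * n) (C_hat n a b) \<longleftrightarrow> lucasU ((a + 1) / b) (2 ^ r * (m + 1)) \<noteq> 0"
    using is_LCD_C_hat_iff_lucasU_CHAR_2[OF char b, of n a] unfolding n .
  also have "\<dots> \<longleftrightarrow> lucasU Y (2 ^ r * (m + 1)) \<noteq> 0"
    unfolding Y_def to_ac_lucasU[symmetric] to_ac_eq_0_iff ..
  also have "\<dots> \<longleftrightarrow> \<not> (Y = 0 \<or> (\<exists>t. t ^ (m + 1) = 1 \<and> t \<noteq> 1 \<and> Y = t + inverse t))"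
    using lucasU_eq_0_iff_CHAR_2[of r Y m] char \<open>r \<ge> 1\<close> by simp
  finally show ?thesis .
qed

lemma even_if_not_dvd_power_2_Suc:
  fixes N r m :: nat
  assumes "N = 2 ^ r * (m + 1)" and "\<not> 2 ^ (r + 1) dvd N"
  shows "even m"
proof (rule ccontr)
  assume "odd m"
  then obtain j where "m + 1 = 2 * (j + 1)"
    by (auto elim: oddE)
  hence "N = 2 ^ (r + 1) * (j + 1)"
    using assms(1) by simp
  thus False
    using assms(2) by simp
qed

lemma mem_translated_union_iff:
  fixes x c :: "'a::ab_group_add"
  shows "x \<in> {- c} \<union> {- c + f i + g i | i. P i} \<longleftrightarrow>
    x + c = 0 \<or> (\<exists>i. P i \<and> x + c = f i + g i)"
  by (auto simp: algebra_simps eq_neg_iff_add_eq_0 diff_eq_eq)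

theorem theorem2p9:
  fixes a b :: "'a::{finite,field}" and n r m k :: nat
  assumes q_pow2: "card (UNIV :: 'a set) = 2 ^ k"
    and b_nz: "b \<noteq> 0"
    and n_ge: "n \<ge> 2"
    and r_dvd: "2 ^ r dvd n + 1"
    and r_ndvd: "\<not> 2 ^ (r + 1) dvd n + 1"
    and m_def: "n + 1 = 2 ^ r * (m + 1)"
    and r_pos: "r \<ge> 1"
  shows "even m
    \<and> (m > 0 \<longrightarrow> (\<forall>\<theta> :: 'a alg_closure. primitive_root_of_unity (m + 1) \<theta> \<longrightarrow>
          (is_LCD (2 * n) (C_hat n a b) \<longleftrightarrow>
             to_ac (a / b) \<notin> {- to_ac (1 / b)} \<union>
               {- to_ac (1 / b) + \<theta> ^ i + inverse \<theta> ^ i | i. 1 \<le> i \<and> i \<le> m div 2})))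
    \<and> (m = 0 \<longrightarrow> (is_LCD (2 * n) (C_hat n a b) \<longleftrightarrow> a \<noteq> 1))"
proof -
  have char: "CHAR('a) = 2"
    by (rule CHAR_eq_2_if_card_eq_power_2[OF q_pow2])
  have even_m: "even m"
    using even_if_not_dvd_power_2_Suc[OF m_def r_ndvd] .
  note lcd_iff = is_LCD_C_hat_iff_CHAR_2[OF char b_nz m_def r_pos, of a]
  have Y: "to_ac ((a + 1) / b) = to_ac (a / b) + to_ac (1 / b)"
    by (simp add: add_divide_distrib)
  have "is_LCD (2 * n) (C_hat n a b) \<longleftrightarrow>
      to_ac (a / b) \<notin> {- to_ac (1 / b)} \<union>
        {- to_ac (1 / b) + \<theta> ^ i + inverse \<theta> ^ i | i. 1 \<le> i \<and> i \<le> m div 2}"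
    if "primitive_root_of_unity (m + 1) \<theta>" for \<theta> :: "'a alg_closure"
    unfolding lcd_iff sum_inverse_root_of_unity_iff[OF that even_m] mem_translated_union_iff Y
    by blast
  moreover have "is_LCD (2 * n) (C_hat n a b) \<longleftrightarrow> a \<noteq> 1" if "m = 0"
  proof -
    have "is_LCD (2 * n) (C_hat n a b) \<longleftrightarrow> a + 1 \<noteq> 0"
      unfolding lcd_iff to_ac_eq_0_iff using that b_nz by simp
    also have "\<dots> \<longleftrightarrow> a \<noteq> 1"
      using uminus_CHAR_2[OF char, of 1] by (auto simp: add_eq_0_iff2)
    finally show ?thesis .
  qed
  ultimately show ?thesis
    using even_m by blast
qed

end
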